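(* Let $(X,Y)$ be a bivariate normal random vector in $\mathbb R^2$ with $\mathrm{Var}(X)=\mathrm{Var}(Y)>0$ and Pearson correlation $\varrho$. Using the metric $|x-y|$ on $\mathbb R$ and the Manhattan metric on pairs, \[ \big|1-\sqrt{1-\varrho}\,\big|\le\mathrm{eCor}(X,Y). \]
   Context: For probability measures $\mu,\nu$ on a metric space $(S,\rho)$ with finite first moments, $e(\mu,\nu)=\inf_\gamma\int\rho\,d\gamma$ over all couplings $\gamma$ of $\mu,\nu$. Pairs of reals carry the Manhattan metric $d[(x,y),(u,v)]=|x-u|+|y-v|$. $\mathrm{eCov}(X,Y)=e\big[(X,Y),(X',Y')\big]$ is the distance w.r.t. $d$ between the joint law of $(X,Y)$ and the product of its marginals (law of $(X',Y')$ with $X'\overset d=X$, $Y'\overset d=Y$ independent); $\mathrm{eVar}(X)=\mathrm{eCov}(X,X)$; $\mathrm{eCor}(X,Y)=\mathrm{eCov}(X,Y)/\min\{\mathrm{eVar}(X),\mathrm{eVar}(Y)\}$ when the denominator is positive. *)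

theory Defs
  imports "HOL-Probability.Probability"
begin

definition couplings :: "'a::second_countable_topology measure \<Rightarrow> 'a measure \<Rightarrow> ('a \<times> 'a) measure set" where
  "couplings \<mu> \<nu> = {\<gamma>. prob_space \<gamma> \<and> sets \<gamma> = sets (borel :: ('a \<times> 'a) measure) \<and>
      distr \<gamma> borel fst = \<mu> \<and> distr \<gamma> borel snd = \<nu>}"

definition edist :: "('a::second_countable_topology \<Rightarrow> 'a \<Rightarrow> real) \<Rightarrow> 'a measure \<Rightarrow> 'a measure \<Rightarrow> real" where
  "edist \<rho> \<mu> \<nu> = enn2real (INF \<gamma>\<in>couplings \<mu> \<nu>. \<integral>\<^sup>+ z. ennreal (\<rho> (fst z) (snd z)) \<partial>\<gamma>)"

definition manhattan :: "real \<times> real \<Rightarrow> real \<times> real \<Rightarrow> real" where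
  "manhattan p q = \<bar>fst p - fst q\<bar> + \<bar>snd p - snd q\<bar>"

definition eCov :: "'s measure \<Rightarrow> ('s \<Rightarrow> real) \<Rightarrow> ('s \<Rightarrow> real) \<Rightarrow> real" where
  "eCov M X Y = edist manhattan (distr M borel (\<lambda>\<omega>. (X \<omega>, Y \<omega>)))
      (distr M borel X \<Otimes>\<^sub>M distr M borel Y)"

definition eVar :: "'s measure \<Rightarrow> ('s \<Rightarrow> real) \<Rightarrow> real" where
  "eVar M X = eCov M X X"

definition eCor :: "'s measure \<Rightarrow> ('s \<Rightarrow> real) \<Rightarrow> ('s \<Rightarrow> real) \<Rightarrow> real" where
  "eCor M X Y = eCov M X Y / min (eVar M X) (eVar M Y)"

definition gaussian_rv :: "'s measure \<Rightarrow> ('s \<Rightarrow> real) \<Rightarrow> bool" where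
  "gaussian_rv M Z \<longleftrightarrow> (\<exists>c. AE \<omega> in M. Z \<omega> = c) \<or>
     (\<exists>m \<sigma>. \<sigma> > 0 \<and> distributed M lborel Z (normal_density m \<sigma>))"

definition bivariate_normal :: "'s measure \<Rightarrow> ('s \<Rightarrow> real) \<Rightarrow> ('s \<Rightarrow> real) \<Rightarrow> bool" where
  "bivariate_normal M X Y \<longleftrightarrow> X \<in> borel_measurable M \<and> Y \<in> borel_measurable M \<and>
     (\<forall>a b. gaussian_rv M (\<lambda>\<omega>. a * X \<omega> + b * Y \<omega>))"

definition covariance :: "'s measure \<Rightarrow> ('s \<Rightarrow> real) \<Rightarrow> ('s \<Rightarrow> real) \<Rightarrow> real" where
  "covariance M X Y = (\<integral>\<omega>. (X \<omega> - (\<integral>x. X x \<partial>M)) * (Y \<omega> - (\<integral>x. Y x \<partial>M)) \<partial>M)"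

definition pearson_cor :: "'s measure \<Rightarrow> ('s \<Rightarrow> real) \<Rightarrow> ('s \<Rightarrow> real) \<Rightarrow> real" where
  "pearson_cor M X Y = covariance M X Y / sqrt (covariance M X X * covariance M Y Y)"

end

theory Submission
  imports Defs
begin

text \<open>
  Since \<open>(X, Y)\<close> is bivariate normal with common variance \<open>V\<close>, the variables \<open>X\<close>, \<open>Y\<close> and
  \<open>X - Y\<close> are normal. For a normal \<open>X\<close>, \<open>eVar X\<close> is the mean absolute difference
  \<open>E|X\<^sub>1 - X\<^sub>2|\<close> of two independent copies, i.e. \<open>sqrt (2/pi) * sqrt (2 V)\<close>: coupling the
  diagonal \<open>(X\<^sub>1, X\<^sub>1)\<close> with \<open>(X\<^sub>1, X\<^sub>2)\<close> gives the upper bound, and the easy half of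
  Kantorovich-Rubinstein duality, applied to the 1-Lipschitz test function \<open>|x - y|\<close>, the lower
  bound. The same duality with the test function \<open>|x - y - (E X - E Y)|\<close> bounds \<open>eCov(X, Y)\<close>
  from below by \<open>sqrt (2/pi) * |sqrt (2 V) - sqrt (Var (X - Y))|\<close>, the difference of its means
  under the product and the joint law. As \<open>Var (X - Y) = 2 V (1 - \<rho>)\<close>, dividing by \<open>eVar\<close>
  yields \<open>|1 - sqrt (1 - \<rho>)|\<close>.
\<close>

section \<open>Couplings and the transport distance\<close>

lemma (in prob_space) distr_pair_snd:
  assumes "sigma_finite_measure N"
  shows "distr (M \<Otimes>\<^sub>M N) N snd = N"
proof (intro measure_eqI)
  interpret N: sigma_finite_measure N by fact
  fix A assume A: "A \<in> sets (distr (M \<Otimes>\<^sub>M N) N snd)"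
  then have "emeasure (distr (M \<Otimes>\<^sub>M N) N snd) A = emeasure (M \<Otimes>\<^sub>M N) (space M \<times> A)"
    by (auto simp: emeasure_distr space_pair_measure dest: sets.sets_into_space
        intro!: arg_cong2[where f = emeasure])
  with A show "emeasure (distr (M \<Otimes>\<^sub>M N) N snd) A = emeasure N A"
    by (simp add: N.emeasure_pair_measure_Times emeasure_space_1)
qed simp

lemma borel_measurable_fst:
    "fst \<in> borel_measurable (borel :: ('a::topological_space \<times> 'b::topological_space) measure)"
  and borel_measurable_snd:
    "snd \<in> borel_measurable (borel :: ('a::topological_space \<times> 'b::topological_space) measure)"
  by (intro borel_measurable_continuous_onI continuous_intros)+

lemma couplingsD:
  assumes "\<gamma> \<in> couplings \<mu> \<nu>"
  shows "prob_space \<gamma>" "sets \<gamma> = sets borel" "distr \<gamma> borel fst = \<mu>" "distr \<gamma> borel snd = \<nu>"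
  using assms by (auto simp: couplings_def)

lemma couplings_measurable:
  assumes "\<gamma> \<in> couplings \<mu> \<nu>"
  shows "fst \<in> borel_measurable \<gamma>" "snd \<in> borel_measurable \<gamma>"
  unfolding measurable_cong_sets[OF couplingsD(2)[OF assms] refl]
  by (rule borel_measurable_fst borel_measurable_snd)+

lemma pair_measure_in_couplings:
  fixes A B :: "'a::second_countable_topology measure"
  assumes A: "prob_space A" "sets A = sets borel" and B: "prob_space B" "sets B = sets borel"
  shows "A \<Otimes>\<^sub>M B \<in> couplings A B"
proof -
  have "distr (A \<Otimes>\<^sub>M B) borel fst = distr (A \<Otimes>\<^sub>M B) A fst"
    using A by (intro distr_cong) auto
  also have "\<dots> = A" using prob_space.distr_pair_fst[OF B(1)] .
  finally have "distr (A \<Otimes>\<^sub>M B) borel fst = A" .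
  moreover have "distr (A \<Otimes>\<^sub>M B) borel snd = distr (A \<Otimes>\<^sub>M B) B snd"
    using B by (intro distr_cong) auto
  moreover have "\<dots> = B"
    using prob_space.distr_pair_snd[OF A(1) prob_space_imp_sigma_finite[OF B(1)]] .
  moreover have "sets (A \<Otimes>\<^sub>M B) = sets (borel :: ('a \<times> 'a) measure)"
    using sets_pair_measure_cong[OF A(2) B(2)] borel_prod by metis
  ultimately show ?thesis
    using A B by (simp add: couplings_def prob_space_pair)
qed

lemma edist_le_coupling_cost:
  assumes "\<gamma> \<in> couplings \<mu> \<nu>" "(\<integral>\<^sup>+ z. ennreal (\<rho> (fst z) (snd z)) \<partial>\<gamma>) \<le> ennreal c" "0 \<le> c"
  shows "edist \<rho> \<mu> \<nu> \<le> c"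
proof -
  have "(INF \<gamma>\<in>couplings \<mu> \<nu>. \<integral>\<^sup>+ z. ennreal (\<rho> (fst z) (snd z)) \<partial>\<gamma>) \<le> ennreal c"
    using assms(1,2) by (meson INF_lower2)
  then have "edist \<rho> \<mu> \<nu> \<le> enn2real (ennreal c)"
    unfolding edist_def by (intro enn2real_mono) auto
  then show ?thesis
    using assms(3) by simp
qed

lemma edist_geI:
  assumes "\<gamma>\<^sub>0 \<in> couplings \<mu> \<nu>" "(\<integral>\<^sup>+ z. ennreal (\<rho> (fst z) (snd z)) \<partial>\<gamma>\<^sub>0) < \<infinity>"
    and "\<And>\<gamma>. \<gamma> \<in> couplings \<mu> \<nu> \<Longrightarrow> ennreal b \<le> (\<integral>\<^sup>+ z. ennreal (\<rho> (fst z) (snd z)) \<partial>\<gamma>)"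
  shows "b \<le> edist \<rho> \<mu> \<nu>"
proof (cases "b \<le> 0")
  case True
  then show ?thesis by (simp add: edist_def order_trans[OF _ enn2real_nonneg])
next
  case False
  have "ennreal b \<le> (INF \<gamma>\<in>couplings \<mu> \<nu>. \<integral>\<^sup>+ z. ennreal (\<rho> (fst z) (snd z)) \<partial>\<gamma>)"
    using assms(3) by (rule INF_greatest)
  moreover have "(INF \<gamma>\<in>couplings \<mu> \<nu>. \<integral>\<^sup>+ z. ennreal (\<rho> (fst z) (snd z)) \<partial>\<gamma>) < \<infinity>"
    using assms(1,2) by (meson INF_lower le_less_trans)
  ultimately have "enn2real (ennreal b) \<le> edist \<rho> \<mu> \<nu>"
    unfolding edist_def by (intro enn2real_mono) auto
  then show ?thesis using False by simp
qed

lemma borel_measurable_manhattan: "(\<lambda>z. manhattan (fst z) (snd z)) \<in> borel_measurable borel"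
  unfolding manhattan_def by (intro borel_measurable_continuous_onI continuous_intros)

lemma manhattan_nonneg: "0 \<le> manhattan p q"
  by (simp add: manhattan_def)

lemma coupling_cost_ge_integral_diff:
  fixes g :: "'a::second_countable_topology \<Rightarrow> real"
  assumes \<gamma>: "\<gamma> \<in> couplings \<mu> \<nu>"
    and \<rho>: "(\<lambda>z. \<rho> (fst z) (snd z)) \<in> borel_measurable borel" "\<And>p q. 0 \<le> \<rho> p q"
    and g: "g \<in> borel_measurable borel" "\<And>p q. g q - g p \<le> \<rho> p q"
    and int: "integrable \<mu> g" "integrable \<nu> g"
  shows "ennreal (integral\<^sup>L \<nu> g - integral\<^sup>L \<mu> g) \<le> (\<integral>\<^sup>+ z. ennreal (\<rho> (fst z) (snd z)) \<partial>\<gamma>)"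
proof (cases "(\<integral>\<^sup>+ z. ennreal (\<rho> (fst z) (snd z)) \<partial>\<gamma>) = \<infinity>")
  case False
  note C = couplingsD[OF \<gamma>]
  note fst = couplings_measurable(1)[OF \<gamma>] and snd = couplings_measurable(2)[OF \<gamma>]
  have cost: "(\<lambda>z. \<rho> (fst z) (snd z)) \<in> borel_measurable \<gamma>"
    using \<rho>(1) unfolding measurable_cong_sets[OF C(2) refl] .
  have int_cost: "integrable \<gamma> (\<lambda>z. \<rho> (fst z) (snd z))"
    using False \<rho>(2) by (intro integrableI_bounded cost) (simp add: top.not_eq_extremum)
  have int_g: "integrable \<gamma> (\<lambda>z. g (fst z))" "integrable \<gamma> (\<lambda>z. g (snd z))"
    using int integrable_distr_eq[OF fst g(1)] integrable_distr_eq[OF snd g(1)] C(3,4) by auto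
  have "integral\<^sup>L \<nu> g - integral\<^sup>L \<mu> g = (\<integral>z. g (snd z) \<partial>\<gamma>) - (\<integral>z. g (fst z) \<partial>\<gamma>)"
    using integral_distr[OF fst g(1)] integral_distr[OF snd g(1)] C(3,4) by simp
  also have "\<dots> = (\<integral>z. g (snd z) - g (fst z) \<partial>\<gamma>)"
    using int_g by simp
  also have "\<dots> \<le> (\<integral>z. \<rho> (fst z) (snd z) \<partial>\<gamma>)"
    using int_g int_cost g(2) by (intro integral_mono) auto
  finally show ?thesis
    using int_cost \<rho>(2) by (simp add: nn_integral_eq_integral ennreal_leI)
qed simp

text \<open>The easy half of Kantorovich-Rubinstein duality.\<close>

lemma edist_ge_abs_integral_diff:
  fixes g :: "'a::second_countable_topology \<Rightarrow> real"
  assumes \<gamma>\<^sub>0: "\<gamma>\<^sub>0 \<in> couplings \<mu> \<nu>" "(\<integral>\<^sup>+ z. ennreal (\<rho> (fst z) (snd z)) \<partial>\<gamma>\<^sub>0) < \<infinity>"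
    and \<rho>: "(\<lambda>z. \<rho> (fst z) (snd z)) \<in> borel_measurable borel" "\<And>p q. 0 \<le> \<rho> p q"
    and g: "g \<in> borel_measurable borel" "\<And>p q. \<bar>g q - g p\<bar> \<le> \<rho> p q"
    and int: "integrable \<mu> g" "integrable \<nu> g"
  shows "\<bar>integral\<^sup>L \<nu> g - integral\<^sup>L \<mu> g\<bar> \<le> edist \<rho> \<mu> \<nu>"
proof (rule edist_geI[OF \<gamma>\<^sub>0])
  fix \<gamma> assume \<gamma>: "\<gamma> \<in> couplings \<mu> \<nu>"
  have "ennreal (integral\<^sup>L \<nu> g - integral\<^sup>L \<mu> g) \<le> (\<integral>\<^sup>+ z. ennreal (\<rho> (fst z) (snd z)) \<partial>\<gamma>)"
    using g(2) by (intro coupling_cost_ge_integral_diff[OF \<gamma> \<rho> g(1) _ int]) (simp add: abs_le_iff)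
  moreover have "ennreal (integral\<^sup>L \<nu> (\<lambda>p. - g p) - integral\<^sup>L \<mu> (\<lambda>p. - g p))
      \<le> (\<integral>\<^sup>+ z. ennreal (\<rho> (fst z) (snd z)) \<partial>\<gamma>)"
    using g int by (intro coupling_cost_ge_integral_diff[OF \<gamma> \<rho>]) (auto simp: abs_le_iff)
  ultimately show "ennreal \<bar>integral\<^sup>L \<nu> g - integral\<^sup>L \<mu> g\<bar>
      \<le> (\<integral>\<^sup>+ z. ennreal (\<rho> (fst z) (snd z)) \<partial>\<gamma>)"
    by (cases "0 \<le> integral\<^sup>L \<nu> g - integral\<^sup>L \<mu> g") auto
qed

lemma manhattan_coupling_cost_finite:
  fixes \<mu> \<nu> :: "(real \<times> real) measure"
  assumes \<gamma>: "\<gamma> \<in> couplings \<mu> \<nu>"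
    and int: "integrable \<mu> (\<lambda>p. \<bar>fst p\<bar> + \<bar>snd p\<bar>)" "integrable \<nu> (\<lambda>p. \<bar>fst p\<bar> + \<bar>snd p\<bar>)"
  shows "(\<integral>\<^sup>+ z. ennreal (manhattan (fst z) (snd z)) \<partial>\<gamma>) < \<infinity>"
proof -
  define a where "a p = \<bar>fst p\<bar> + \<bar>snd p\<bar>" for p :: "real \<times> real"
  note C = couplingsD[OF \<gamma>]
  have a: "a \<in> borel_measurable borel"
    unfolding a_def[abs_def] by (intro borel_measurable_continuous_onI continuous_intros)
  note fst = couplings_measurable(1)[OF \<gamma>] and snd = couplings_measurable(2)[OF \<gamma>]
  have "integrable \<gamma> (\<lambda>z. a (fst z))"
    using int(1) integrable_distr_eq[OF fst a] C(3) by (simp add: a_def[abs_def])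
  moreover have "integrable \<gamma> (\<lambda>z. a (snd z))"
    using int(2) integrable_distr_eq[OF snd a] C(4) by (simp add: a_def[abs_def])
  ultimately have "integrable \<gamma> (\<lambda>z. a (fst z) + a (snd z))"
    by (rule Bochner_Integration.integrable_add)
  then have int_cost: "integrable \<gamma> (\<lambda>z. manhattan (fst z) (snd z))"
  proof (rule Bochner_Integration.integrable_bound)
    show "(\<lambda>z. manhattan (fst z) (snd z)) \<in> borel_measurable \<gamma>"
      using borel_measurable_manhattan unfolding measurable_cong_sets[OF C(2) refl] .
    show "AE z in \<gamma>. norm (manhattan (fst z) (snd z)) \<le> norm (a (fst z) + a (snd z))"
      by (intro AE_I2) (simp add: manhattan_def a_def)
  qed
  show ?thesis
    using integrableD(2)[OF int_cost] by (simp add: less_top)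
qed

lemma edist_manhattan_ge_abs_integral_diff:
  fixes \<mu> \<nu> :: "(real \<times> real) measure" and g :: "real \<times> real \<Rightarrow> real"
  assumes \<mu>: "prob_space \<mu>" "sets \<mu> = sets borel" and \<nu>: "prob_space \<nu>" "sets \<nu> = sets borel"
    and moments: "integrable \<mu> (\<lambda>p. \<bar>fst p\<bar> + \<bar>snd p\<bar>)" "integrable \<nu> (\<lambda>p. \<bar>fst p\<bar> + \<bar>snd p\<bar>)"
    and g: "g \<in> borel_measurable borel" "\<And>p q. \<bar>g q - g p\<bar> \<le> manhattan p q"
      "integrable \<mu> g" "integrable \<nu> g"
  shows "\<bar>integral\<^sup>L \<nu> g - integral\<^sup>L \<mu> g\<bar> \<le> edist manhattan \<mu> \<nu>"
proof -
  have coupling: "\<mu> \<Otimes>\<^sub>M \<nu> \<in> couplings \<mu> \<nu>"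
    by (rule pair_measure_in_couplings[OF \<mu> \<nu>])
  show ?thesis
    by (rule edist_ge_abs_integral_diff[OF coupling manhattan_coupling_cost_finite[OF coupling moments]
          borel_measurable_manhattan manhattan_nonneg g])
qed

lemma integrable_pair_measure_fst:
  fixes f :: "'a \<Rightarrow> real"
  assumes "prob_space B" "integrable A f"
  shows "integrable (A \<Otimes>\<^sub>M B) (\<lambda>z. f (fst z))"
proof -
  have "integrable (distr (A \<Otimes>\<^sub>M B) A fst) f"
    by (subst prob_space.distr_pair_fst[OF assms(1)]) (rule assms(2))
  then show ?thesis
    using integrable_distr_eq[OF measurable_fst[of A B] borel_measurable_integrable[OF assms(2)]]
    by simp
qed

lemma integrable_pair_measure_snd:
  fixes f :: "'b \<Rightarrow> real"
  assumes "prob_space A" "prob_space B" "integrable B f"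
  shows "integrable (A \<Otimes>\<^sub>M B) (\<lambda>z. f (snd z))"
proof -
  have "integrable (distr (A \<Otimes>\<^sub>M B) B snd) f"
    by (subst prob_space.distr_pair_snd[OF assms(1) prob_space_imp_sigma_finite[OF assms(2)]])
      (rule assms(3))
  then show ?thesis
    using integrable_distr_eq[OF measurable_snd[of A B] borel_measurable_integrable[OF assms(3)]]
    by simp
qed

lemma pair_law_in_couplings:
  fixes X Y :: "'s \<Rightarrow> 'a::second_countable_topology"
  assumes "prob_space M" "X \<in> borel_measurable M" "Y \<in> borel_measurable M"
  shows "distr M borel X \<Otimes>\<^sub>M distr M borel Y \<in> couplings (distr M borel X) (distr M borel Y)"
  using assms by (intro pair_measure_in_couplings) (auto intro: prob_space.prob_space_distr)

lemma integrable_pair_law: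
  fixes X Y :: "'s \<Rightarrow> real"
  assumes M: "prob_space M" and X: "integrable M X" and Y: "integrable M Y"
  shows "integrable (distr M borel X \<Otimes>\<^sub>M distr M borel Y) fst"
    and "integrable (distr M borel X \<Otimes>\<^sub>M distr M borel Y) snd"
proof -
  have "prob_space (distr M borel X)" "prob_space (distr M borel Y)"
    using X Y by (auto intro: prob_space.prob_space_distr[OF M])
  moreover have "integrable (distr M borel X) (\<lambda>x. x)" "integrable (distr M borel Y) (\<lambda>x. x)"
    using X Y by (simp_all add: integrable_distr_eq)
  ultimately show "integrable (distr M borel X \<Otimes>\<^sub>M distr M borel Y) fst"
    and "integrable (distr M borel X \<Otimes>\<^sub>M distr M borel Y) snd"
    using integrable_pair_measure_fst[of "distr M borel Y" "distr M borel X" "\<lambda>x. x"]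
      integrable_pair_measure_snd[of "distr M borel X" "distr M borel Y" "\<lambda>x. x"] by auto
qed

section \<open>Energy covariance and mean absolute differences\<close>

lemma eCov_ge_mean_abs_diff:
  fixes X Y :: "'s \<Rightarrow> real"
  assumes M: "prob_space M" and X: "integrable M X" and Y: "integrable M Y"
  shows "\<bar>(\<integral>z. \<bar>fst z - snd z - d\<bar> \<partial>(distr M borel X \<Otimes>\<^sub>M distr M borel Y))
      - (\<integral>\<omega>. \<bar>X \<omega> - Y \<omega> - d\<bar> \<partial>M)\<bar> \<le> eCov M X Y"
proof -
  interpret M: prob_space M by (rule M)
  define \<mu> where "\<mu> = distr M borel (\<lambda>\<omega>. (X \<omega>, Y \<omega>))"
  define \<nu> where "\<nu> = distr M borel X \<Otimes>\<^sub>M distr M borel Y"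
  define g where "g = (\<lambda>p::real \<times> real. \<bar>fst p - snd p - d\<bar>)"
  have mX: "X \<in> borel_measurable M" and mY: "Y \<in> borel_measurable M"
    using X Y by auto
  have mXY: "(\<lambda>\<omega>. (X \<omega>, Y \<omega>)) \<in> borel_measurable M"
    using measurable_Pair[OF mX mY] by (simp add: borel_prod)
  have \<mu>: "prob_space \<mu>" "sets \<mu> = sets borel"
    unfolding \<mu>_def using prob_space.prob_space_distr[OF M mXY] by auto
  have \<nu>: "\<nu> \<in> couplings (distr M borel X) (distr M borel Y)"
    unfolding \<nu>_def by (rule pair_law_in_couplings[OF M mX mY])
  interpret \<nu>: prob_space \<nu> using couplingsD(1)[OF \<nu>] .
  have int_\<nu>: "integrable \<nu> fst" "integrable \<nu> snd"
    unfolding \<nu>_def by (rule integrable_pair_law[OF M X Y])+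
  have int_\<mu>: "integrable \<mu> h \<longleftrightarrow> integrable M (\<lambda>\<omega>. h (X \<omega>, Y \<omega>))"
    if "h \<in> borel_measurable borel" for h :: "real \<times> real \<Rightarrow> real"
    unfolding \<mu>_def using integrable_distr_eq[OF mXY that] .
  have meas_g: "g \<in> borel_measurable borel"
    unfolding g_def by (intro borel_measurable_continuous_onI continuous_intros)
  have meas_moment: "(\<lambda>p::real \<times> real. \<bar>fst p\<bar> + \<bar>snd p\<bar>) \<in> borel_measurable borel"
    by (intro borel_measurable_continuous_onI continuous_intros)
  have "integrable M (\<lambda>\<omega>. g (X \<omega>, Y \<omega>))"
    unfolding g_def fst_conv snd_conv
    by (intro integrable_abs Bochner_Integration.integrable_diff X Y M.integrable_const)
  then have int_\<mu>_g: "integrable \<mu> g"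
    using int_\<mu>[OF meas_g] by simp
  have int_\<nu>_g: "integrable \<nu> g"
    unfolding g_def
    by (intro integrable_abs Bochner_Integration.integrable_diff int_\<nu> \<nu>.integrable_const)
  have lip_g: "\<bar>g q - g p\<bar> \<le> manhattan p q" for p q
    unfolding g_def manhattan_def by linarith
  have "integrable M (\<lambda>\<omega>. \<bar>X \<omega>\<bar> + \<bar>Y \<omega>\<bar>)"
    by (intro Bochner_Integration.integrable_add integrable_abs X Y)
  then have "integrable \<mu> (\<lambda>p. \<bar>fst p\<bar> + \<bar>snd p\<bar>)"
    using int_\<mu>[OF meas_moment] by simp
  moreover have "integrable \<nu> (\<lambda>p. \<bar>fst p\<bar> + \<bar>snd p\<bar>)"
    by (intro Bochner_Integration.integrable_add integrable_abs int_\<nu>)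
  ultimately have "\<bar>integral\<^sup>L \<nu> g - integral\<^sup>L \<mu> g\<bar> \<le> edist manhattan \<mu> \<nu>"
    using edist_manhattan_ge_abs_integral_diff[OF \<mu> couplingsD(1,2)[OF \<nu>] _ _ meas_g lip_g
        int_\<mu>_g int_\<nu>_g] by blast
  moreover have "integral\<^sup>L \<mu> g = (\<integral>\<omega>. \<bar>X \<omega> - Y \<omega> - d\<bar> \<partial>M)"
    unfolding \<mu>_def using integral_distr[OF mXY meas_g] by (simp add: g_def)
  ultimately show ?thesis
    unfolding eCov_def \<nu>_def[symmetric] \<mu>_def[symmetric] g_def[symmetric] by simp
qed

text \<open>Coupling \<open>(X\<^sub>1, X\<^sub>1)\<close> with \<open>(X\<^sub>1, X\<^sub>2)\<close> costs exactly \<open>|X\<^sub>1 - X\<^sub>2|\<close>.\<close>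

lemma eVar_le_mean_abs_diff:
  fixes X :: "'s \<Rightarrow> real"
  assumes M: "prob_space M" and X: "integrable M X"
  shows "eVar M X \<le> (\<integral>z. \<bar>fst z - snd z\<bar> \<partial>(distr M borel X \<Otimes>\<^sub>M distr M borel X))"
proof -
  define N where "N = distr M borel X"
  define \<nu> where "\<nu> = N \<Otimes>\<^sub>M N"
  define \<gamma> where "\<gamma> = distr \<nu> borel (\<lambda>z. ((fst z, fst z), z))"
  have mX: "X \<in> borel_measurable M" using X by auto
  have \<nu>: "\<nu> \<in> couplings N N"
    unfolding \<nu>_def N_def by (rule pair_law_in_couplings[OF M mX mX])
  note \<nu>' = couplingsD(1,2,3)[OF \<nu>]
  have meas_diag: "(\<lambda>x::real. (x, x)) \<in> borel_measurable borel"
    by (intro borel_measurable_continuous_onI continuous_intros)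
  have meas_lift: "(\<lambda>z. ((fst z, fst z), z)) \<in> borel_measurable \<nu>"
    unfolding measurable_cong_sets[OF \<nu>'(2) refl]
    by (intro borel_measurable_continuous_onI continuous_intros)
  have "distr \<gamma> borel fst = distr (distr \<nu> borel fst) borel (\<lambda>x. (x, x))"
    unfolding \<gamma>_def using meas_lift meas_diag \<nu>'(2)
    by (simp add: distr_distr borel_measurable_fst measurable_cong_sets[OF \<nu>'(2) refl] comp_def)
  also have "\<dots> = distr M borel (\<lambda>\<omega>. (X \<omega>, X \<omega>))"
    using distr_distr[OF meas_diag mX] by (simp add: \<nu>'(3) N_def comp_def)
  finally have fst_\<gamma>: "distr \<gamma> borel fst = distr M borel (\<lambda>\<omega>. (X \<omega>, X \<omega>))" .
  have "distr \<gamma> borel snd = distr \<nu> borel (\<lambda>z. z)"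
    unfolding \<gamma>_def using meas_lift \<nu>'(2)
    by (simp add: distr_distr borel_measurable_snd measurable_cong_sets[OF \<nu>'(2) refl] comp_def)
  also have "\<dots> = \<nu>"
    by (rule distr_id2[OF \<nu>'(2)[symmetric]])
  finally have snd_\<gamma>: "distr \<gamma> borel snd = \<nu>" .
  have \<gamma>: "\<gamma> \<in> couplings (distr M borel (\<lambda>\<omega>. (X \<omega>, X \<omega>))) \<nu>"
    using fst_\<gamma> snd_\<gamma> prob_space.prob_space_distr[OF \<nu>'(1) meas_lift]
    by (simp add: couplings_def \<gamma>_def)
  have "integrable \<nu> fst" "integrable \<nu> snd"
    unfolding \<nu>_def N_def by (rule integrable_pair_law[OF M X X])+
  then have int_diff: "integrable \<nu> (\<lambda>z. \<bar>fst z - snd z\<bar>)" by auto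
  have "(\<integral>\<^sup>+ z. ennreal (manhattan (fst z) (snd z)) \<partial>\<gamma>)
      = (\<integral>\<^sup>+ z. ennreal (manhattan (fst z, fst z) z) \<partial>\<nu>)"
    unfolding \<gamma>_def using meas_lift borel_measurable_manhattan by (simp add: nn_integral_distr)
  also have "\<dots> = (\<integral>\<^sup>+ z. ennreal \<bar>fst z - snd z\<bar> \<partial>\<nu>)"
    by (simp add: manhattan_def)
  also have "\<dots> = ennreal (\<integral>z. \<bar>fst z - snd z\<bar> \<partial>\<nu>)"
    using int_diff by (simp add: nn_integral_eq_integral)
  finally show ?thesis
    unfolding eVar_def eCov_def \<nu>_def[symmetric] N_def[symmetric]
    by (intro edist_le_coupling_cost[OF \<gamma>]) auto
qed

lemma eVar_eq_mean_abs_diff: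
  fixes X :: "'s \<Rightarrow> real"
  assumes "prob_space M" "integrable M X"
  shows "eVar M X = (\<integral>z. \<bar>fst z - snd z\<bar> \<partial>(distr M borel X \<Otimes>\<^sub>M distr M borel X))"
  using eVar_le_mean_abs_diff[OF assms] eCov_ge_mean_abs_diff[OF assms assms(2), of 0]
  by (simp add: eVar_def)

section \<open>Gaussian variables\<close>

lemma normal_distributed_mean_abs_dev:
  assumes "0 < \<sigma>" and Z: "distributed M lborel Z (normal_density m \<sigma>)"
  shows "integrable M (\<lambda>\<omega>. \<bar>Z \<omega> - m\<bar>)" "(\<integral>\<omega>. \<bar>Z \<omega> - m\<bar> \<partial>M) = sqrt (2 / pi) * \<sigma>"
proof -
  have "integrable lborel (\<lambda>x. normal_density m \<sigma> x * \<bar>x - m\<bar>)"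
    using integrable_normal_moment_abs[OF \<open>0 < \<sigma>\<close>, of m 1] by simp
  then show "integrable M (\<lambda>\<omega>. \<bar>Z \<omega> - m\<bar>)"
    using distributed_integrable[OF Z, of "\<lambda>x. \<bar>x - m\<bar>"] by simp
  have "(\<integral>x. normal_density m \<sigma> x * \<bar>x - m\<bar> \<partial>lborel) = sqrt (2 / pi) * \<sigma>"
    using integral_normal_moment_abs_odd[OF \<open>0 < \<sigma>\<close>, of m 0] by simp
  then show "(\<integral>\<omega>. \<bar>Z \<omega> - m\<bar> \<partial>M) = sqrt (2 / pi) * \<sigma>"
    using distributed_integral[OF Z, of "\<lambda>x. \<bar>x - m\<bar>"] by simp
qed

lemma (in prob_space) normal_distributed_moments:
  assumes "0 < \<sigma>" and Z: "distributed M lborel Z (normal_density m \<sigma>)"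
  shows "integrable M Z" "integrable M (\<lambda>\<omega>. (Z \<omega> - expectation Z)\<^sup>2)"
proof -
  show "integrable M Z"
    using distributed_integrable[OF Z, of "\<lambda>x. x"] integrable_normal_moment_nz_1[OF \<open>0 < \<sigma>\<close>] by simp
  show "integrable M (\<lambda>\<omega>. (Z \<omega> - expectation Z)\<^sup>2)"
    using distributed_integrable[OF Z, of "\<lambda>x. (x - m)\<^sup>2"]
      integrable_normal_moment[OF \<open>0 < \<sigma>\<close>, of m 2]
      normal_distributed_expectation[OF assms] by simp
qed

lemma (in prob_space) gaussian_rv_cases:
  assumes "gaussian_rv M Z" "Z \<in> borel_measurable M"
  obtains "AE \<omega> in M. Z \<omega> = expectation Z" "variance Z = 0"
  | "0 < variance Z" "distributed M lborel Z (normal_density (expectation Z) (sqrt (variance Z)))"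
proof -
  from assms(1) consider (const) c where "AE \<omega> in M. Z \<omega> = c"
    | (normal) m \<sigma> where "0 < \<sigma>" "distributed M lborel Z (normal_density m \<sigma>)"
    unfolding gaussian_rv_def by blast
  then show thesis
  proof cases
    case const
    have "expectation Z = expectation (\<lambda>_. c)"
      using assms(2) const by (intro integral_cong_AE) auto
    then have "expectation Z = c" by (simp add: prob_space)
    moreover have "variance Z = expectation (\<lambda>_. 0 :: real)"
      using assms(2) const \<open>expectation Z = c\<close> by (intro integral_cong_AE) auto
    ultimately show thesis
      using const that(1) by simp
  next
    case normal
    then show thesis
      using that(2) normal_distributed_expectation[OF normal] normal_distributed_variance[OF normal]
      by simp
  qed
qed

lemma (in prob_space) gaussian_rv_normal:
  assumes "gaussian_rv M Z" "Z \<in> borel_measurable M" "0 < variance Z"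
  shows "distributed M lborel Z (normal_density (expectation Z) (sqrt (variance Z)))"
  using assms(1,2) by (cases rule: gaussian_rv_cases) (use assms(3) in auto)

lemma (in prob_space) gaussian_rv_mean_abs_dev:
  assumes "gaussian_rv M Z" "Z \<in> borel_measurable M"
  shows "(\<integral>\<omega>. \<bar>Z \<omega> - expectation Z\<bar> \<partial>M) = sqrt (2 / pi) * sqrt (variance Z)"
  using assms
proof (cases rule: gaussian_rv_cases)
  case 1
  then have "(\<integral>\<omega>. \<bar>Z \<omega> - expectation Z\<bar> \<partial>M) = expectation (\<lambda>_. 0 :: real)"
    using assms(2) by (intro integral_cong_AE) auto
  with 1 show ?thesis by simp
next
  case 2
  show ?thesis
    by (rule normal_distributed_mean_abs_dev(2)[OF real_sqrt_gt_zero[OF 2(1)] 2(2)])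
qed

lemma distributed_if_distr_eq:
  assumes "distributed M lborel X f" "Y \<in> borel_measurable N" "distr N borel Y = distr M borel X"
  shows "distributed N lborel Y f"
proof -
  have "distr N lborel Y = distr M lborel X"
    using assms(3) by (simp add: distr_cong[OF refl sets_lborel[symmetric]])
  with assms(1,2) show ?thesis
    by (simp add: distributed_def)
qed

lemma normal_pair_measure_mean_abs_diff:
  fixes X Y :: "'s \<Rightarrow> real"
  assumes M: "prob_space M" and "0 < \<sigma>" "0 < \<tau>"
    and X: "distributed M lborel X (normal_density mx \<sigma>)"
    and Y: "distributed M lborel Y (normal_density my \<tau>)"
  shows "(\<integral>z. \<bar>fst z - snd z - (mx - my)\<bar> \<partial>(distr M borel X \<Otimes>\<^sub>M distr M borel Y))
      = sqrt (2 / pi) * sqrt (\<sigma>\<^sup>2 + \<tau>\<^sup>2)"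
proof -
  define \<nu> where "\<nu> = distr M borel X \<Otimes>\<^sub>M distr M borel Y"
  have "X \<in> borel_measurable M" "Y \<in> borel_measurable M"
    using distributed_measurable[OF X] distributed_measurable[OF Y] by simp_all
  then have coupling: "\<nu> \<in> couplings (distr M borel X) (distr M borel Y)"
    unfolding \<nu>_def by (rule pair_law_in_couplings[OF M])
  note \<nu> = couplingsD[OF coupling]
  note fst = couplings_measurable(1)[OF coupling] and snd = couplings_measurable(2)[OF coupling]
  interpret \<nu>: prob_space \<nu> by (rule \<nu>(1))
  have "sets (borel \<Otimes>\<^sub>M borel) = sets \<nu>"
    by (simp only: borel_prod \<nu>(2))
  then have joint: "distr \<nu> (borel \<Otimes>\<^sub>M borel) (\<lambda>z. (fst z, snd z)) = \<nu>"
    by (simp add: distr_id2)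
  have marginals: "distr \<nu> borel fst \<Otimes>\<^sub>M distr \<nu> borel snd = \<nu>"
    unfolding \<nu>(3,4) by (simp add: \<nu>_def)
  have "\<nu>.indep_var borel fst borel snd"
    unfolding \<nu>.indep_var_distribution_eq by (intro conjI fst snd) (simp only: joint marginals)
  then have "distributed \<nu> lborel (\<lambda>z. fst z - snd z) (normal_density (mx - my) (sqrt (\<sigma>\<^sup>2 + \<tau>\<^sup>2)))"
    using assms(2,3) distributed_if_distr_eq[OF X fst \<nu>(3)] distributed_if_distr_eq[OF Y snd \<nu>(4)]
    by (rule \<nu>.diff_indep_normal)
  from normal_distributed_mean_abs_dev(2)[OF _ this] assms(2,3) show ?thesis
    unfolding \<nu>_def by (simp add: add_pos_pos)
qed

lemma normal_distributed_eVar: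
  assumes "prob_space M" "0 < \<sigma>" "distributed M lborel X (normal_density m \<sigma>)"
  shows "eVar M X = sqrt (2 / pi) * sqrt (2 * \<sigma>\<^sup>2)"
proof -
  have "\<sigma>\<^sup>2 + \<sigma>\<^sup>2 = 2 * \<sigma>\<^sup>2" by simp
  then show ?thesis
    using eVar_eq_mean_abs_diff[OF assms(1) prob_space.normal_distributed_moments(1)[OF assms]]
      normal_pair_measure_mean_abs_diff[OF assms(1,2,2,3,3)]
    by simp
qed

lemma normal_distributed_eCov_ge:
  assumes M: "prob_space M" and "0 < \<sigma>" "0 < \<tau>"
    and X: "distributed M lborel X (normal_density mx \<sigma>)"
    and Y: "distributed M lborel Y (normal_density my \<tau>)"
  shows "\<bar>sqrt (2 / pi) * sqrt (\<sigma>\<^sup>2 + \<tau>\<^sup>2) - (\<integral>\<omega>. \<bar>X \<omega> - Y \<omega> - (mx - my)\<bar> \<partial>M)\<bar> \<le> eCov M X Y"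
  using eCov_ge_mean_abs_diff[OF M prob_space.normal_distributed_moments(1)[OF M \<open>0 < \<sigma>\<close> X]
      prob_space.normal_distributed_moments(1)[OF M \<open>0 < \<tau>\<close> Y], of "mx - my"]
    normal_pair_measure_mean_abs_diff[OF assms]
  by simp

section \<open>Pearson correlation\<close>

lemma abs_mult_le_sum_squares: "\<bar>x * y\<bar> \<le> x\<^sup>2 + (y::real)\<^sup>2"
proof -
  have "2 * \<bar>x * y\<bar> \<le> x\<^sup>2 + y\<^sup>2"
    using sum_squares_bound[of "\<bar>x\<bar>" "\<bar>y\<bar>"] by (simp add: abs_mult mult.assoc)
  then show ?thesis
    using abs_ge_zero[of "x * y"] by linarith
qed

lemma (in prob_space) variance_diff:
  fixes X Y :: "'a \<Rightarrow> real"
  assumes X: "integrable M X" "integrable M (\<lambda>\<omega>. (X \<omega> - expectation X)\<^sup>2)"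
    and Y: "integrable M Y" "integrable M (\<lambda>\<omega>. (Y \<omega> - expectation Y)\<^sup>2)"
  shows "variance (\<lambda>\<omega>. X \<omega> - Y \<omega>) = variance X + variance Y - 2 * covariance M X Y"
proof -
  define X' where "X' \<omega> = X \<omega> - expectation X" for \<omega>
  define Y' where "Y' \<omega> = Y \<omega> - expectation Y" for \<omega>
  have "integrable M (\<lambda>\<omega>. X' \<omega> * Y' \<omega>)"
  proof (rule Bochner_Integration.integrable_bound)
    show "integrable M (\<lambda>\<omega>. (X' \<omega>)\<^sup>2 + (Y' \<omega>)\<^sup>2)"
      using X(2) Y(2) unfolding X'_def Y'_def by simp
    show "AE \<omega> in M. norm (X' \<omega> * Y' \<omega>) \<le> norm ((X' \<omega>)\<^sup>2 + (Y' \<omega>)\<^sup>2)"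
      by (intro AE_I2) (metis real_norm_def abs_mult_le_sum_squares abs_ge_self order_trans)
  qed (use X Y in \<open>auto simp: X'_def Y'_def\<close>)
  moreover have "(X \<omega> - Y \<omega> - expectation (\<lambda>\<omega>. X \<omega> - Y \<omega>))\<^sup>2
      = (X' \<omega>)\<^sup>2 + (Y' \<omega>)\<^sup>2 - 2 * (X' \<omega> * Y' \<omega>)" for \<omega>
    using X(1) Y(1) by (simp add: X'_def Y'_def power2_eq_square algebra_simps)
  ultimately show ?thesis
    using X(2) Y(2) by (simp add: covariance_def X'_def Y'_def power2_eq_square)
qed

lemma (in prob_space) one_minus_pearson_cor:
  fixes X Y :: "'a \<Rightarrow> real"
  assumes X: "integrable M X" "integrable M (\<lambda>\<omega>. (X \<omega> - expectation X)\<^sup>2)"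
    and Y: "integrable M Y" "integrable M (\<lambda>\<omega>. (Y \<omega> - expectation Y)\<^sup>2)"
    and "variance X = variance Y" "0 < variance X"
  shows "1 - pearson_cor M X Y = variance (\<lambda>\<omega>. X \<omega> - Y \<omega>) / (2 * variance X)"
proof -
  define V where "V = variance X"
  define K where "K = covariance M X Y"
  have "0 < V" using assms(6) by (simp add: V_def)
  have "covariance M X X = V" "covariance M Y Y = V"
    using assms(5) by (simp_all add: V_def covariance_def power2_eq_square)
  then have pearson: "pearson_cor M X Y = K / V"
    unfolding pearson_cor_def K_def[symmetric] using \<open>0 < V\<close> by (simp add: real_sqrt_mult_self)
  have diff: "variance (\<lambda>\<omega>. X \<omega> - Y \<omega>) = 2 * V - 2 * K"
    using variance_diff[OF X Y] assms(5) unfolding V_def K_def by linarith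
  show ?thesis
    unfolding pearson diff V_def[symmetric] using \<open>0 < V\<close> by (simp add: field_simps)
qed

lemma abs_one_minus_sqrt_divide_le:
  fixes a b c e :: real
  assumes "0 < c" "0 < a" "0 \<le> b" "\<bar>c * sqrt a - c * sqrt b\<bar> \<le> e"
  shows "\<bar>1 - sqrt (b / a)\<bar> \<le> e / (c * sqrt a)"
proof -
  have "\<bar>1 - sqrt (b / a)\<bar> = \<bar>sqrt a - sqrt b\<bar> / sqrt a"
    using assms(2) by (simp add: real_sqrt_divide field_simps)
  also have "\<dots> = \<bar>c * sqrt a - c * sqrt b\<bar> / (c * sqrt a)"
    using assms(1) by (simp add: abs_mult flip: right_diff_distrib)
  also have "\<dots> \<le> e / (c * sqrt a)"
    using assms by (intro divide_right_mono) auto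
  finally show ?thesis .
qed

theorem mainTheorem3:
  fixes M :: "'s measure" and X Y :: "'s \<Rightarrow> real"
  assumes "prob_space M"
    and "bivariate_normal M X Y"
    and "prob_space.variance M X = prob_space.variance M Y"
    and "prob_space.variance M X > 0"
  shows "\<bar>1 - sqrt (1 - pearson_cor M X Y)\<bar> \<le> eCor M X Y"
proof -
  interpret prob_space M by (rule assms(1))
  have mX: "X \<in> borel_measurable M" and mY: "Y \<in> borel_measurable M"
    and gaussian: "\<And>a b. gaussian_rv M (\<lambda>\<omega>. a * X \<omega> + b * Y \<omega>)"
    using assms(2) by (auto simp: bivariate_normal_def)
  define V where "V = variance X"
  have "0 < V" "0 < sqrt V" and sqrt_V: "(sqrt V)\<^sup>2 = V" "V + V = 2 * V"
    using assms(4) by (simp_all add: V_def)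
  have X: "distributed M lborel X (normal_density (expectation X) (sqrt V))"
    using gaussian_rv_normal[OF gaussian[of 1 0]] mX assms(4) by (simp add: V_def)
  have Y: "distributed M lborel Y (normal_density (expectation Y) (sqrt V))"
    using gaussian_rv_normal[OF gaussian[of 0 1]] mY assms(3,4) by (simp add: V_def)
  note moments =
    normal_distributed_moments[OF \<open>0 < sqrt V\<close> X] normal_distributed_moments[OF \<open>0 < sqrt V\<close> Y]
  have eCor: "eCor M X Y = eCov M X Y / (sqrt (2 / pi) * sqrt (2 * V))"
    using normal_distributed_eVar[OF assms(1) \<open>0 < sqrt V\<close> X]
      normal_distributed_eVar[OF assms(1) \<open>0 < sqrt V\<close> Y] sqrt_V(1)
    by (simp add: eCor_def)
  have "expectation (\<lambda>\<omega>. X \<omega> - Y \<omega>) = expectation X - expectation Y"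
    using moments(1,3) by simp
  then have "(\<integral>\<omega>. \<bar>X \<omega> - Y \<omega> - (expectation X - expectation Y)\<bar> \<partial>M)
      = sqrt (2 / pi) * sqrt (variance (\<lambda>\<omega>. X \<omega> - Y \<omega>))"
    using gaussian_rv_mean_abs_dev[of "\<lambda>\<omega>. X \<omega> - Y \<omega>"] gaussian[of 1 "-1"] mX mY by simp
  then have "\<bar>sqrt (2 / pi) * sqrt (2 * V) - sqrt (2 / pi) * sqrt (variance (\<lambda>\<omega>. X \<omega> - Y \<omega>))\<bar>
      \<le> eCov M X Y"
    using normal_distributed_eCov_ge[OF assms(1) \<open>0 < sqrt V\<close> \<open>0 < sqrt V\<close> X Y] sqrt_V
    by simp
  then show ?thesis
    unfolding eCor one_minus_pearson_cor[OF moments assms(3,4)] V_def[symmetric]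
    using \<open>0 < V\<close> variance_positive by (intro abs_one_minus_sqrt_divide_le) auto
qed

end
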